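(* Let $n\ge 3$ and let $K_n$ be the complete graph on $n$ vertices, equipped with a weak IASI in which a vertex $v$ is not mono-indexed. Then the sparing number $\varphi(K_n)$ equals the number of triangles of $K_n$ that contain $v$.
   Context: Let $\mathbb{N}_0$ be the set of non-negative integers and $\mathcal{P}(\mathbb{N}_0)$ its power set; for $A,B\subseteq\mathbb{N}_0$, $A+B=\{a+b: a\in A, b\in B\}$. All graphs are simple, finite, without isolated vertices. An integer additive set-indexer (IASI) of a graph $G$ is an injective map $f:V(G)\to\mathcal{P}(\mathbb{N}_0)$ such that the induced map $f^+:E(G)\to\mathcal{P}(\mathbb{N}_0)$, $f^+(uv)=f(u)+f(v)$, is also injective. A weak IASI is an IASI $f$ with $|f^+(uv)|=\max(|f(u)|,|f(v)|)$ for every edge $uv$. A vertex $v$ (resp. edge $e$) is mono-indexed if $|f(v)|=1$ (resp. $|f^+(e)|=1$). The sparing number $\varphi(G)$ of a graph $G$ admitting a weak IASI is the minimum number of mono-indexed edges over all weak IASIs of $G$. *)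

theory Defs
  imports Main
begin

text \<open>Graphs: vertex set V, edge set E of 2-element subsets of V.\<close>

definition sumset :: "nat set \<Rightarrow> nat set \<Rightarrow> nat set" where
  "sumset A B = {a + b | a b. a \<in> A \<and> b \<in> B}"

definition iasi :: "'a set \<Rightarrow> 'a set set \<Rightarrow> ('a \<Rightarrow> nat set) \<Rightarrow> bool" where
  "iasi V E f \<longleftrightarrow>
     (\<forall>v\<in>V. f v \<noteq> {} \<and> finite (f v)) \<and> inj_on f V \<and>
     (\<forall>u v x y. {u, v} \<in> E \<longrightarrow> {x, y} \<in> E \<longrightarrow>
        sumset (f u) (f v) = sumset (f x) (f y) \<longrightarrow> {u, v} = {x, y})"

definition weak_iasi :: "'a set \<Rightarrow> 'a set set \<Rightarrow> ('a \<Rightarrow> nat set) \<Rightarrow> bool" where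
  "weak_iasi V E f \<longleftrightarrow> iasi V E f \<and>
     (\<forall>u v. {u, v} \<in> E \<longrightarrow> card (sumset (f u) (f v)) = max (card (f u)) (card (f v)))"

definition mono_edges :: "'a set set \<Rightarrow> ('a \<Rightarrow> nat set) \<Rightarrow> 'a set set" where
  "mono_edges E f = {e \<in> E. \<exists>u v. e = {u, v} \<and> card (sumset (f u) (f v)) = 1}"

definition sparing_number :: "'a set \<Rightarrow> 'a set set \<Rightarrow> nat" where
  "sparing_number V E = (LEAST k. \<exists>f. weak_iasi V E f \<and> card (mono_edges E f) = k)"

definition complete_edges :: "nat \<Rightarrow> nat set set" where
  "complete_edges n = {e. e \<subseteq> {..<n} \<and> card e = 2}"

definition triangles :: "'a set \<Rightarrow> 'a set set \<Rightarrow> 'a set set" where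
  "triangles V E = {T. T \<subseteq> V \<and> card T = 3 \<and> (\<forall>x\<in>T. \<forall>y\<in>T. x \<noteq> y \<longrightarrow> {x, y} \<in> E)}"

end

theory Submission
  imports Defs
begin

text \<open>In a weak IASI an edge \<open>uv\<close> has \<open>|f(u) + f(v)| = max |f(u)| |f(v)|\<close>, while
  \<open>|A + B| > |A|\<close> as soon as \<open>|B| \<ge> 2\<close>; hence every edge has a mono-indexed end, and an
  edge is mono-indexed exactly when both ends are. In \<open>K\<^sub>n\<close> at most one vertex is therefore
  not mono-indexed, so every weak IASI has at least \<open>C(n-1, 2)\<close> mono-indexed edges, and one
  with a vertex \<open>v\<close> that is not mono-indexed attains this bound. The triangles through \<open>v\<close>
  correspond to the \<open>C(n-1, 2)\<close> pairs of other vertices.\<close>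

lemma sumset_eq_image: "sumset A B = (\<lambda>(a, b). a + b) ` (A \<times> B)"
  by (auto simp: sumset_def)

lemma finite_sumset: "finite A \<Longrightarrow> finite B \<Longrightarrow> finite (sumset A B)"
  by (simp add: sumset_eq_image)

lemma sumset_commute: "sumset A B = sumset B A"
  unfolding sumset_def by (metis add.commute)

lemma card_le_card_sumset:
  assumes "finite A" "finite B" "b \<in> B"
  shows "card A \<le> card (sumset A B)"
proof -
  have "card A = card ((\<lambda>a. a + b) ` A)"
    by (simp add: card_image)
  also have "\<dots> \<le> card (sumset A B)"
    using assms by (intro card_mono finite_sumset) (auto simp: sumset_def)
  finally show ?thesis .
qed

lemma card_less_card_sumset:
  assumes "finite A" "finite B" "A \<noteq> {}" "card B \<ge> 2"
  shows "card A < card (sumset A B)"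
proof -
  obtain b b' where "b \<in> B" "b' \<in> B" "b < b'"
  proof -
    have "\<not> (\<forall>x\<in>B. \<forall>y\<in>B. x = y)"
      using assms(2,4) card_le_Suc0_iff_eq[of B] by simp
    then obtain x y where "x \<in> B" "y \<in> B" "x \<noteq> y"
      by blast
    then show thesis
      using that by (cases "x < y") auto
  qed
  let ?S = "insert (Max A + b') ((\<lambda>a. a + b) ` A)"
  have "Max A + b' \<notin> (\<lambda>a. a + b) ` A"
    using \<open>b < b'\<close> Max_ge[OF \<open>finite A\<close>] by fastforce
  then have "card ?S = card A + 1"
    using \<open>finite A\<close> by (simp add: card_image)
  moreover have "?S \<subseteq> sumset A B"
    using Max_in[OF assms(1,3)] \<open>b \<in> B\<close> \<open>b' \<in> B\<close> by (auto simp: sumset_def)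
  then have "card ?S \<le> card (sumset A B)"
    using assms by (simp add: card_mono finite_sumset)
  ultimately show ?thesis by simp
qed

lemma card_sumset_eq_1_iff:
  assumes "finite A" "finite B" "A \<noteq> {}" "B \<noteq> {}"
  shows "card (sumset A B) = 1 \<longleftrightarrow> card A = 1 \<and> card B = 1"
proof
  assume sum: "card (sumset A B) = 1"
  obtain a b where "a \<in> A" "b \<in> B" using assms by auto
  then have "card A \<le> 1" "card B \<le> 1"
    using card_le_card_sumset[of A B b] card_le_card_sumset[of B A a] assms sum
    by (simp_all add: sumset_commute)
  moreover have "card A > 0" "card B > 0"
    using assms by (simp_all add: card_gt_0_iff)
  ultimately show "card A = 1 \<and> card B = 1" by linarith
next
  assume "card A = 1 \<and> card B = 1"
  then obtain a b where "A = {a}" "B = {b}" by (auto simp: card_Suc_eq)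
  then show "card (sumset A B) = 1" by (simp add: sumset_def)
qed

lemma weak_iasi_label_nonempty:
  "weak_iasi V E f \<Longrightarrow> v \<in> V \<Longrightarrow> finite (f v) \<and> f v \<noteq> {}"
  by (simp add: weak_iasi_def iasi_def)

lemma weak_iasi_edge_has_mono_end:
  assumes "weak_iasi V E f" "{u, w} \<in> E" "u \<in> V" "w \<in> V"
  shows "card (f u) = 1 \<or> card (f w) = 1"
proof (rule ccontr)
  assume "\<not> ?thesis"
  moreover have "finite (f u)" "f u \<noteq> {}" "finite (f w)" "f w \<noteq> {}"
    using weak_iasi_label_nonempty[OF assms(1)] assms(3,4) by simp_all
  moreover from calculation(2-5) have "card (f u) \<noteq> 0" "card (f w) \<noteq> 0"
    by simp_all
  ultimately have "card (f u) \<ge> 2" "card (f w) \<ge> 2"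
    by presburger+
  then have "card (f u) < card (sumset (f u) (f w))" "card (f w) < card (sumset (f w) (f u))"
    using card_less_card_sumset \<open>finite (f u)\<close> \<open>finite (f w)\<close> \<open>f u \<noteq> {}\<close> \<open>f w \<noteq> {}\<close>
    by blast+
  moreover have "card (sumset (f u) (f w)) = max (card (f u)) (card (f w))"
    using assms(1,2) by (simp add: weak_iasi_def)
  ultimately show False
    unfolding sumset_commute[of "f w"] by linarith
qed

lemma mono_edges_weak_iasi:
  assumes "weak_iasi V E f" "\<forall>e\<in>E. e \<subseteq> V \<and> card e = 2"
  shows "mono_edges E f = {e \<in> E. \<forall>u\<in>e. card (f u) = 1}"
proof -
  have mono_iff: "card (sumset (f u) (f w)) = 1 \<longleftrightarrow> (\<forall>x\<in>{u, w}. card (f x) = 1)"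
    if "{u, w} \<in> E" for u w
  proof -
    have "u \<in> V" "w \<in> V"
      using that assms(2) by auto
    then have "finite (f u)" "f u \<noteq> {}" "finite (f w)" "f w \<noteq> {}"
      using weak_iasi_label_nonempty[OF assms(1)] by simp_all
    then show ?thesis
      using card_sumset_eq_1_iff[of "f u" "f w"] by simp
  qed
  have "(\<exists>u w. e = {u, w} \<and> card (sumset (f u) (f w)) = 1) \<longleftrightarrow> (\<forall>x\<in>e. card (f x) = 1)"
    if "e \<in> E" for e
  proof -
    have "card e = 2"
      using that assms(2) by blast
    then obtain u w where "e = {u, w}"
      by (auto simp: card_2_iff)
    then show ?thesis
      using mono_iff that by blast
  qed
  then show ?thesis
    unfolding mono_edges_def by blast
qed

abbreviation mono_vertices :: "nat \<Rightarrow> (nat \<Rightarrow> nat set) \<Rightarrow> nat set" where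
  "mono_vertices n f \<equiv> {u. u < n \<and> card (f u) = 1}"

lemma complete_edges_simple: "\<forall>e\<in>complete_edges n. e \<subseteq> {..<n} \<and> card e = 2"
  by (simp add: complete_edges_def)

lemma card_mono_edges_complete:
  assumes "weak_iasi {..<n} (complete_edges n) f"
  shows "card (mono_edges (complete_edges n) f) = card (mono_vertices n f) choose 2"
proof -
  have "mono_edges (complete_edges n) f = {e. e \<subseteq> mono_vertices n f \<and> card e = 2}"
    unfolding mono_edges_weak_iasi[OF assms complete_edges_simple]
    by (auto simp: complete_edges_def)
  then show ?thesis by (simp add: n_subsets)
qed

lemma card_mono_vertices_complete:
  assumes "weak_iasi {..<n} (complete_edges n) f"
  shows "n - 1 \<le> card (mono_vertices n f)"
proof -
  have "\<forall>x\<in>{..<n} - mono_vertices n f. \<forall>y\<in>{..<n} - mono_vertices n f. x = y"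
  proof (intro ballI, rule ccontr)
    fix x y assume "x \<in> {..<n} - mono_vertices n f" "y \<in> {..<n} - mono_vertices n f" "x \<noteq> y"
    moreover from this have "{x, y} \<in> complete_edges n"
      by (simp add: complete_edges_def)
    ultimately show False
      using weak_iasi_edge_has_mono_end[OF assms] by auto
  qed
  then have "card ({..<n} - mono_vertices n f) \<le> 1"
    using card_le_Suc0_iff_eq[of "{..<n} - mono_vertices n f"]
    by (simp only: finite_Diff finite_lessThan One_nat_def)
  moreover have "card ({..<n} - mono_vertices n f) = n - card (mono_vertices n f)"
    by (subst card_Diff_subset) auto
  ultimately show ?thesis by simp
qed

lemma sparing_number_complete:
  assumes "weak_iasi {..<n} (complete_edges n) f" "v < n" "card (f v) \<noteq> 1"
  shows "sparing_number {..<n} (complete_edges n) = (n - 1) choose 2"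
  unfolding sparing_number_def
proof (rule Least_equality)
  have "mono_vertices n f \<subseteq> {..<n} - {v}"
    using assms(3) by auto
  moreover have "card ({..<n} - {v}) \<le> card (mono_vertices n f)"
    using assms(2) card_mono_vertices_complete[OF assms(1)] by simp
  ultimately have "mono_vertices n f = {..<n} - {v}"
    by (intro card_seteq) simp_all
  then have "card (mono_edges (complete_edges n) f) = (n - 1) choose 2"
    using assms(2) card_mono_edges_complete[OF assms(1)] by simp
  with assms(1) show "\<exists>g. weak_iasi {..<n} (complete_edges n) g
      \<and> card (mono_edges (complete_edges n) g) = (n - 1) choose 2"
    by blast
next
  fix k assume "\<exists>g. weak_iasi {..<n} (complete_edges n) g
      \<and> card (mono_edges (complete_edges n) g) = k"
  then obtain g where g: "weak_iasi {..<n} (complete_edges n) g"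
    and k: "card (mono_edges (complete_edges n) g) = k" by blast
  have "(n - 1) choose 2 \<le> card (mono_vertices n g) choose 2"
    by (rule binomial_right_mono[OF card_mono_vertices_complete[OF g]])
  then show "(n - 1) choose 2 \<le> k"
    using card_mono_edges_complete[OF g] k by simp
qed

lemma triangles_complete_containing:
  assumes "v < n"
  shows "{T \<in> triangles {..<n} (complete_edges n). v \<in> T}
       = insert v ` {B. B \<subseteq> {..<n} - {v} \<and> card B = 2}"
proof (intro set_eqI iffI)
  fix T assume "T \<in> {T \<in> triangles {..<n} (complete_edges n). v \<in> T}"
  then have T: "T \<subseteq> {..<n}" "card T = 3" "v \<in> T"
    by (auto simp: triangles_def)
  then have "finite T"
    using finite_subset by blast
  with T have "T - {v} \<subseteq> {..<n} - {v}" "card (T - {v}) = 2" "T = insert v (T - {v})"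
    by auto
  then show "T \<in> insert v ` {B. B \<subseteq> {..<n} - {v} \<and> card B = 2}"
    by blast
next
  fix T assume "T \<in> insert v ` {B. B \<subseteq> {..<n} - {v} \<and> card B = 2}"
  then obtain B where B: "T = insert v B" "B \<subseteq> {..<n} - {v}" "card B = 2"
    by auto
  then have "finite B" "v \<notin> B"
    using finite_subset[of B "{..<n}"] by auto
  with B assms have "card T = 3" "T \<subseteq> {..<n}"
    by auto
  moreover have "\<forall>x\<in>T. \<forall>y\<in>T. x \<noteq> y \<longrightarrow> {x, y} \<in> complete_edges n"
    using \<open>T \<subseteq> {..<n}\<close> by (auto simp: complete_edges_def)
  ultimately show "T \<in> {T \<in> triangles {..<n} (complete_edges n). v \<in> T}"
    using B(1) by (simp add: triangles_def)
qed

lemma card_triangles_complete_containing: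
  assumes "v < n"
  shows "card {T \<in> triangles {..<n} (complete_edges n). v \<in> T} = (n - 1) choose 2"
proof -
  have "inj_on (insert v) {B. B \<subseteq> {..<n} - {v} \<and> card B = 2}"
    by (rule inj_onI) (simp add: insert_ident subset_Diff_insert)
  then have "card {T \<in> triangles {..<n} (complete_edges n). v \<in> T}
      = card {B. B \<subseteq> {..<n} - {v} \<and> card B = 2}"
    unfolding triangles_complete_containing[OF assms] by (rule card_image)
  also have "\<dots> = (n - 1) choose 2"
    using assms by (simp add: n_subsets)
  finally show ?thesis .
qed

theorem proposition2p1:
  fixes n v :: nat and f :: "nat \<Rightarrow> nat set"
  assumes "n \<ge> 3"
    and "weak_iasi {..<n} (complete_edges n) f"
    and "v < n"
    and "card (f v) \<noteq> 1"
  shows "sparing_number {..<n} (complete_edges n)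
           = card {T \<in> triangles {..<n} (complete_edges n). v \<in> T}"
  using sparing_number_complete[OF assms(2-4)] card_triangles_complete_containing[OF assms(3)]
  by simp

end
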